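(* For any directed graph $G=(V,E,w)$ with edge weights $w:E\to\mathbb{R}_+$ and vertex weights $\pi:V\to\mathbb{R}_+$, $\lambda^{\triangle}_\pi(G)\le 2\,\vec\phi_\pi(G)$.
   Context: Let $n=|V|$. $\vec\phi_\pi(G)=\min_{\emptyset\ne S\subsetneq V}\frac{\min\{w(\delta^+(S)),w(\delta^-(S))\}}{\min\{\pi(S),\pi(\overline S)\}}$, where $\delta^+(S)$ / $\delta^-(S)$ are the edges leaving / entering $S$ and $\pi(S)=\sum_{i\in S}\pi(i)$. $\mathcal F(G)$ is the set of circulations $F:E\to\mathbb{R}_{\ge0}$ with $F(e)\le w(e)$ ($F(i,j)=0$ if $ij\notin E$). $\lambda^{\triangle}_\pi(G)=\min\max_{F\in\mathcal F(G)}\sum_{i<j}\frac12(F(i,j)+F(j,i))\|v_i-v_j\|^2$, the min over $v_1,\dots,v_n\in\mathbb{R}^n$ with $\sum_i\pi(i)v_i=0$, $\sum_i\pi(i)\|v_i\|^2=1$, and $\|v_i-v_k\|^2+\|v_k-v_j\|^2\ge\|v_i-v_j\|^2$ for all $i,j,k$. *)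

theory Defs
  imports Complex_Main
begin

text \<open>Conventions: the vertex set is V = {0..<n}; a directed graph is given by an edge set
  E \<subseteq> V \<times> V and an edge weight function w (only its values on E matter);
  vertex weights are pi. Vectors in R^n are functions nat \<Rightarrow> real with coordinates 0..<n.\<close>

definition vset :: "nat \<Rightarrow> nat set" where
  "vset n = {0..<n}"

definition pi_weight :: "(nat \<Rightarrow> real) \<Rightarrow> nat set \<Rightarrow> real" where
  "pi_weight p S = (\<Sum>i\<in>S. p i)"

definition out_weight :: "nat \<Rightarrow> (nat \<times> nat) set \<Rightarrow> (nat \<Rightarrow> nat \<Rightarrow> real) \<Rightarrow> nat set \<Rightarrow> real" where
  "out_weight n E w S = (\<Sum>e\<in>E \<inter> (S \<times> (vset n - S)). w (fst e) (snd e))"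

definition in_weight :: "nat \<Rightarrow> (nat \<times> nat) set \<Rightarrow> (nat \<Rightarrow> nat \<Rightarrow> real) \<Rightarrow> nat set \<Rightarrow> real" where
  "in_weight n E w S = (\<Sum>e\<in>E \<inter> ((vset n - S) \<times> S). w (fst e) (snd e))"

definition dir_expansion :: "nat \<Rightarrow> (nat \<times> nat) set \<Rightarrow> (nat \<Rightarrow> nat \<Rightarrow> real) \<Rightarrow> (nat \<Rightarrow> real) \<Rightarrow> real" where
  "dir_expansion n E w p =
     Min ((\<lambda>S. min (out_weight n E w S) (in_weight n E w S)
                 / min (pi_weight p S) (pi_weight p (vset n - S)))
          ` {S. S \<noteq> {} \<and> S \<subset> vset n})"

definition circulations :: "nat \<Rightarrow> (nat \<times> nat) set \<Rightarrow> (nat \<Rightarrow> nat \<Rightarrow> real) \<Rightarrow> (nat \<Rightarrow> nat \<Rightarrow> real) set" where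
  "circulations n E w = {F.
      (\<forall>i j. 0 \<le> F i j) \<and>
      (\<forall>i j. (i, j) \<in> E \<longrightarrow> F i j \<le> w i j) \<and>
      (\<forall>i j. (i, j) \<notin> E \<longrightarrow> F i j = 0) \<and>
      (\<forall>i<n. (\<Sum>j<n. F i j) = (\<Sum>j<n. F j i))}"

definition sqdist :: "nat \<Rightarrow> (nat \<Rightarrow> real) \<Rightarrow> (nat \<Rightarrow> real) \<Rightarrow> real" where
  "sqdist n x y = (\<Sum>k<n. (x k - y k)^2)"

definition sqnorm :: "nat \<Rightarrow> (nat \<Rightarrow> real) \<Rightarrow> real" where
  "sqnorm n x = (\<Sum>k<n. (x k)^2)"

definition feasible_emb :: "nat \<Rightarrow> (nat \<Rightarrow> real) \<Rightarrow> (nat \<Rightarrow> nat \<Rightarrow> real) \<Rightarrow> bool" where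
  "feasible_emb n p v \<longleftrightarrow>
      (\<forall>k<n. (\<Sum>i<n. p i * v i k) = 0) \<and>
      (\<Sum>i<n. p i * sqnorm n (v i)) = 1 \<and>
      (\<forall>i<n. \<forall>j<n. \<forall>k<n. sqdist n (v i) (v k) + sqdist n (v k) (v j) \<ge> sqdist n (v i) (v j))"

definition flow_energy :: "nat \<Rightarrow> (nat \<Rightarrow> nat \<Rightarrow> real) \<Rightarrow> (nat \<Rightarrow> nat \<Rightarrow> real) \<Rightarrow> real" where
  "flow_energy n F v = (\<Sum>(i, j)\<in>{(i, j). i < j \<and> j < n}. (1/2) * (F i j + F j i) * sqdist n (v i) (v j))"

definition lambda_tri :: "nat \<Rightarrow> (nat \<times> nat) set \<Rightarrow> (nat \<Rightarrow> nat \<Rightarrow> real) \<Rightarrow> (nat \<Rightarrow> real) \<Rightarrow> real" where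
  "lambda_tri n E w p =
     Inf ((\<lambda>v. Sup ((\<lambda>F. flow_energy n F v) ` circulations n E w)) ` {v. feasible_emb n p v})"

end

theory Submission
  imports Defs
begin

text \<open>Embed the vertices on a line at two points, a on a minimising cut S and b on its
  complement, normalised so that the embedding is centred and has unit variance; any two-point
  embedding satisfies the triangle inequalities. A circulation carries equally much flow across
  the cut in both directions, so its energy is (a - b)^2 times the flow leaving S, which is at
  most (a - b)^2 min(w(delta^+(S)), w(delta^-(S))). The normalisation forces
  (a - b)^2 = (pi(S) + pi(V - S)) / (pi(S) pi(V - S)) \<le> 2 / min(pi(S), pi(V - S)).\<close>

lemma vset_eq_lessThan: "vset n = {..<n}"
  by (auto simp: vset_def)

lemma sum_ordered_pairs_symmetric:
  fixes f :: "nat \<Rightarrow> nat \<Rightarrow> real"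
  shows "(\<Sum>(i, j)\<in>{(i, j). i < j \<and> j < n}. f i j + f j i)
           = (\<Sum>i<n. \<Sum>j<n. f i j) - (\<Sum>i<n. f i i)"
proof (induction n)
  case 0
  then show ?case by simp
next
  case (Suc n)
  have pairs_Suc: "{(i, j). i < j \<and> j < Suc n} = {(i, j). i < j \<and> j < n} \<union> (\<lambda>i. (i, n)) ` {..<n}"
    by auto
  have "finite {(i, j). i < j \<and> j < n}"
    by (rule finite_subset[of _ "{..<n} \<times> {..<n}"]) auto
  then have "(\<Sum>(i, j)\<in>{(i, j). i < j \<and> j < Suc n}. f i j + f j i)
      = (\<Sum>(i, j)\<in>{(i, j). i < j \<and> j < n}. f i j + f j i) + (\<Sum>i<n. f i n + f n i)"
    unfolding pairs_Suc by (subst sum.union_disjoint) (auto simp: sum.reindex inj_on_def)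
  then show ?case
    using Suc.IH by (simp add: sum.distrib)
qed

definition cut_flow :: "nat \<Rightarrow> (nat \<Rightarrow> nat \<Rightarrow> real) \<Rightarrow> nat set \<Rightarrow> real" where
  "cut_flow n F S = (\<Sum>i\<in>S. \<Sum>j\<in>vset n - S. F i j)"

lemma sum_vset_split:
  fixes h :: "nat \<Rightarrow> real"
  assumes "S \<subseteq> vset n"
  shows "(\<Sum>i<n. h i) = (\<Sum>i\<in>S. h i) + (\<Sum>i\<in>vset n - S. h i)"
  using assms sum.subset_diff[of S "vset n" h] by (simp add: vset_eq_lessThan)

lemma cut_flow_balanced:
  assumes conservation: "\<forall>i<n. (\<Sum>j<n. F i j) = (\<Sum>j<n. F j i)"
    and S: "S \<subseteq> vset n"
  shows "cut_flow n F S = cut_flow n F (vset n - S)"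
proof -
  have compl: "vset n - (vset n - S) = S"
    using S by auto
  have "(\<Sum>i\<in>S. \<Sum>j<n. F i j) = (\<Sum>i\<in>S. \<Sum>j<n. F j i)"
    by (rule sum.cong[OF refl]) (use conservation S in \<open>auto simp: vset_def\<close>)
  moreover have "(\<Sum>i\<in>S. \<Sum>j<n. F i j) = (\<Sum>i\<in>S. \<Sum>j\<in>S. F i j) + cut_flow n F S"
    unfolding cut_flow_def sum_vset_split[OF S] by (simp add: sum.distrib)
  moreover have "(\<Sum>i\<in>S. \<Sum>j<n. F j i) = (\<Sum>i\<in>S. \<Sum>j\<in>S. F j i) + (\<Sum>i\<in>S. \<Sum>j\<in>vset n - S. F j i)"
    unfolding sum_vset_split[OF S] by (simp add: sum.distrib)
  moreover have "(\<Sum>i\<in>S. \<Sum>j\<in>S. F j i) = (\<Sum>i\<in>S. \<Sum>j\<in>S. F i j)"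
    by (rule sum.swap)
  moreover have "(\<Sum>i\<in>S. \<Sum>j\<in>vset n - S. F j i) = cut_flow n F (vset n - S)"
    unfolding cut_flow_def compl by (rule sum.swap)
  ultimately show ?thesis
    by linarith
qed

lemma in_weight_eq_out_weight_compl:
  assumes "S \<subseteq> vset n"
  shows "in_weight n E w S = out_weight n E w (vset n - S)"
proof -
  have "vset n - (vset n - S) = S"
    using assms by auto
  then show ?thesis
    by (simp add: in_weight_def out_weight_def)
qed

lemma circulation_le_abs_weight:
  assumes "F \<in> circulations n E w"
  shows "F i j \<le> \<bar>w i j\<bar>"
  using assms by (cases "(i, j) \<in> E") (force simp: circulations_def)+

lemma cut_flow_le_out_weight:
  assumes F: "F \<in> circulations n E w" and S: "S \<subseteq> vset n"
  shows "cut_flow n F S \<le> out_weight n E w S"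
proof -
  have finite_cut: "finite (S \<times> (vset n - S))"
    using S finite_subset[of S "vset n"] by (simp add: vset_def)
  have off_E: "F i j = 0" if "(i, j) \<notin> E" for i j
    using F that by (simp add: circulations_def)
  have "cut_flow n F S = (\<Sum>e\<in>S \<times> (vset n - S). F (fst e) (snd e))"
    unfolding cut_flow_def by (simp add: sum.cartesian_product case_prod_beta')
  also have "\<dots> = (\<Sum>e\<in>E \<inter> (S \<times> (vset n - S)). F (fst e) (snd e))"
    using finite_cut by (intro sum.mono_neutral_right) (auto intro!: off_E)
  also have "\<dots> \<le> (\<Sum>e\<in>E \<inter> (S \<times> (vset n - S)). w (fst e) (snd e))"
    using F by (intro sum_mono) (auto simp: circulations_def)
  finally show ?thesis
    unfolding out_weight_def .
qed

lemma cut_flow_le_min_cut_weight: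
  assumes F: "F \<in> circulations n E w" and S: "S \<subseteq> vset n"
  shows "cut_flow n F S \<le> min (out_weight n E w S) (in_weight n E w S)"
proof -
  have "cut_flow n F S = cut_flow n F (vset n - S)"
    using F S by (intro cut_flow_balanced) (auto simp: circulations_def)
  then show ?thesis
    using cut_flow_le_out_weight[OF F S] cut_flow_le_out_weight[OF F, of "vset n - S"]
    by (simp add: in_weight_eq_out_weight_compl[OF S])
qed

lemma cut_flow_nonneg:
  assumes "F \<in> circulations n E w"
  shows "0 \<le> cut_flow n F S"
  using assms unfolding cut_flow_def circulations_def by (auto intro!: sum_nonneg)

definition cut_emb :: "nat set \<Rightarrow> real \<Rightarrow> real \<Rightarrow> nat \<Rightarrow> nat \<Rightarrow> real" where
  "cut_emb S a b = (\<lambda>i k. if k = 0 then (if i \<in> S then a else b) else 0)"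

lemma sum_lessThan_at_zero:
  fixes n :: nat and x :: real
  assumes "0 < n"
  shows "(\<Sum>k<n. if k = 0 then x else 0) = x"
  using assms by (simp add: sum.delta)

lemma sqdist_cut_emb:
  assumes "0 < n"
  shows "sqdist n (cut_emb S a b i) (cut_emb S a b j) = (if (i \<in> S) = (j \<in> S) then 0 else (a - b)^2)"
proof -
  have "sqdist n (cut_emb S a b i) (cut_emb S a b j)
      = (\<Sum>k<n. if k = 0 then (if (i \<in> S) = (j \<in> S) then 0 else (a - b)^2) else 0)"
    unfolding sqdist_def cut_emb_def by (intro sum.cong) (auto simp: power2_commute)
  then show ?thesis
    using sum_lessThan_at_zero[OF assms] by simp
qed

lemma sqnorm_cut_emb:
  assumes "0 < n"
  shows "sqnorm n (cut_emb S a b i) = (if i \<in> S then a^2 else b^2)"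
proof -
  have "sqnorm n (cut_emb S a b i) = (\<Sum>k<n. if k = 0 then (if i \<in> S then a^2 else b^2) else 0)"
    unfolding sqnorm_def cut_emb_def by (intro sum.cong) auto
  then show ?thesis
    using sum_lessThan_at_zero[OF assms] by simp
qed

lemma feasible_cut_emb:
  assumes n: "0 < n" and S: "S \<subseteq> vset n"
    and centred: "pi_weight p S * a + pi_weight p (vset n - S) * b = 0"
    and normalised: "pi_weight p S * a^2 + pi_weight p (vset n - S) * b^2 = 1"
  shows "feasible_emb n p (cut_emb S a b)"
  unfolding feasible_emb_def
proof (intro conjI allI impI)
  fix k
  show "(\<Sum>i<n. p i * cut_emb S a b i k) = 0"
  proof (cases "k = 0")
    case True
    then have "(\<Sum>i<n. p i * cut_emb S a b i k) = pi_weight p S * a + pi_weight p (vset n - S) * b"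
      unfolding sum_vset_split[OF S] pi_weight_def by (simp add: cut_emb_def sum_distrib_right)
    then show ?thesis
      using centred by simp
  qed (simp add: cut_emb_def)
next
  have "(\<Sum>i<n. p i * sqnorm n (cut_emb S a b i))
      = pi_weight p S * a^2 + pi_weight p (vset n - S) * b^2"
    unfolding sum_vset_split[OF S] pi_weight_def sqnorm_cut_emb[OF n]
    by (simp add: sum_distrib_right)
  then show "(\<Sum>i<n. p i * sqnorm n (cut_emb S a b i)) = 1"
    using normalised by simp
next
  fix i j k
  show "sqdist n (cut_emb S a b i) (cut_emb S a b j)
      \<le> sqdist n (cut_emb S a b i) (cut_emb S a b k) + sqdist n (cut_emb S a b k) (cut_emb S a b j)"
    unfolding sqdist_cut_emb[OF n] by auto
qed

lemma flow_energy_cut_emb: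
  assumes n: "0 < n" and S: "S \<subseteq> vset n"
  shows "flow_energy n F (cut_emb S a b)
           = (a - b)^2 / 2 * (cut_flow n F S + cut_flow n F (vset n - S))"
proof -
  define f where "f i j = (a - b)^2 / 2 * (if (i \<in> S) = (j \<in> S) then 0 else F i j)" for i j
  have "flow_energy n F (cut_emb S a b) = (\<Sum>(i, j)\<in>{(i, j). i < j \<and> j < n}. f i j + f j i)"
    unfolding flow_energy_def sqdist_cut_emb[OF n] f_def
    by (intro sum.cong) (auto simp: algebra_simps)
  also have "\<dots> = (\<Sum>i<n. \<Sum>j<n. f i j)"
    unfolding sum_ordered_pairs_symmetric by (simp add: f_def)
  also have "\<dots> = (a - b)^2 / 2 * (cut_flow n F S + cut_flow n F (vset n - S))"
    unfolding f_def cut_flow_def sum_vset_split[OF S] sum_distrib_left[symmetric]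
    using S by (simp add: Diff_Diff_Int Int_absorb1)
  finally show ?thesis .
qed

lemma circulation_energy_cut_emb:
  assumes F: "F \<in> circulations n E w" and n: "0 < n" and S: "S \<subseteq> vset n"
  shows "flow_energy n F (cut_emb S a b) = (a - b)^2 * cut_flow n F S"
proof -
  have "cut_flow n F (vset n - S) = cut_flow n F S"
    using F S by (intro cut_flow_balanced[symmetric]) (auto simp: circulations_def)
  then have "flow_energy n F (cut_emb S a b) = (a - b)^2 / 2 * (2 * cut_flow n F S)"
    using flow_energy_cut_emb[OF n S, of F a b] by simp
  then show ?thesis
    by simp
qed

text \<open>This is where the factor 2 comes from: the centred unit-variance two-point distribution
  with masses A and B has (a - b)^2 = 1 / min A B + 1 / max A B.\<close>

lemma two_point_normalisation:
  fixes A B :: real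
  assumes A: "0 < A" and B: "0 < B"
  obtains a b where "A * a + B * b = 0" "A * a^2 + B * b^2 = 1" "(a - b)^2 * min A B \<le> 2"
proof -
  define t where "t = 1 / sqrt (A * B * (A + B))"
  define a where "a = t * B"
  define b where "b = - t * A"
  have t2: "t^2 * (A * B * (A + B)) = 1"
    unfolding t_def using A B by (simp add: power_divide)
  have "A * a + B * b = 0"
    unfolding a_def b_def by (simp add: algebra_simps)
  moreover have "A * a^2 + B * b^2 = t^2 * (A * B * (A + B))"
    unfolding a_def b_def by (simp add: algebra_simps power2_eq_square)
  moreover have "(a - b)^2 * min A B * max A B \<le> 2 * max A B"
  proof -
    have "(a - b)^2 * min A B * max A B = (a - b)^2 * (A * B)"
      by (simp add: min_def max_def)
    also have "\<dots> = (A + B) * (t^2 * (A * B * (A + B)))"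
      unfolding a_def b_def by (simp add: algebra_simps power2_eq_square)
    also have "\<dots> = A + B"
      using t2 by simp
    finally show ?thesis
      by simp
  qed
  then have "(a - b)^2 * min A B \<le> 2"
    using A B by (simp add: mult_le_cancel_right_pos)
  ultimately show ?thesis
    using that t2 by simp
qed

lemma flow_energy_mono:
  assumes "\<And>i j. F i j \<le> G i j"
  shows "flow_energy n F v \<le> flow_energy n G v"
  unfolding flow_energy_def
proof (intro sum_mono, clarify)
  fix i j
  have "0 \<le> sqdist n (v i) (v j)"
    unfolding sqdist_def by (intro sum_nonneg) auto
  then show "1 / 2 * (F i j + F j i) * sqdist n (v i) (v j) \<le> 1 / 2 * (G i j + G j i) * sqdist n (v i) (v j)"
    using assms[of i j] assms[of j i] by (intro mult_right_mono) auto
qed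

lemma zero_in_circulations:
  assumes "\<forall>(i, j)\<in>E. 0 \<le> w i j"
  shows "(\<lambda>i j. 0) \<in> circulations n E w"
  using assms by (auto simp: circulations_def)

lemma Sup_flow_energy_nonneg:
  assumes "\<forall>(i, j)\<in>E. 0 \<le> w i j"
  shows "0 \<le> Sup ((\<lambda>F. flow_energy n F v) ` circulations n E w)"
proof -
  have "bdd_above ((\<lambda>F. flow_energy n F v) ` circulations n E w)"
    using flow_energy_mono[OF circulation_le_abs_weight] by (intro bdd_aboveI) auto
  moreover have "flow_energy n (\<lambda>i j. 0) v = 0"
    unfolding flow_energy_def by simp
  ultimately show ?thesis
    using zero_in_circulations[OF assms] by (metis cSup_upper image_eqI)
qed

lemma lambda_tri_le:
  assumes "\<forall>(i, j)\<in>E. 0 \<le> w i j" and "feasible_emb n p v"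
    and "\<forall>F\<in>circulations n E w. flow_energy n F v \<le> c"
  shows "lambda_tri n E w p \<le> c"
proof -
  have "lambda_tri n E w p \<le> Sup ((\<lambda>F. flow_energy n F v) ` circulations n E w)"
    unfolding lambda_tri_def using assms(1,2) Sup_flow_energy_nonneg
    by (intro cInf_lower) (auto intro: bdd_belowI[of _ 0])
  also have "\<dots> \<le> c"
    using assms(3) zero_in_circulations[OF assms(1)] by (intro cSup_least) auto
  finally show ?thesis .
qed

definition cut_ratio :: "nat \<Rightarrow> (nat \<times> nat) set \<Rightarrow> (nat \<Rightarrow> nat \<Rightarrow> real) \<Rightarrow> (nat \<Rightarrow> real) \<Rightarrow> nat set \<Rightarrow> real" where
  "cut_ratio n E w p S = min (out_weight n E w S) (in_weight n E w S)
                          / min (pi_weight p S) (pi_weight p (vset n - S))"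

lemma dir_expansion_attained:
  assumes "2 \<le> n"
  obtains S where "S \<noteq> {}" "S \<subset> vset n" "dir_expansion n E w p = cut_ratio n E w p S"
proof -
  let ?cuts = "{S. S \<noteq> {} \<and> S \<subset> vset n}"
  have "finite ?cuts"
  proof (rule finite_subset)
    show "?cuts \<subseteq> Pow (vset n)"
      by blast
    show "finite (Pow (vset n))"
      by (simp add: vset_def)
  qed
  moreover have "{0} \<in> ?cuts"
  proof -
    have "0 \<in> vset n" "1 \<in> vset n"
      using assms by (simp_all add: vset_def)
    then show ?thesis
      by auto
  qed
  ultimately have "Min (cut_ratio n E w p ` ?cuts) \<in> cut_ratio n E w p ` ?cuts"
    by (intro Min_in) auto
  moreover have "dir_expansion n E w p = Min (cut_ratio n E w p ` ?cuts)"
    unfolding dir_expansion_def cut_ratio_def ..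
  ultimately show ?thesis
    using that by auto
qed

lemma cut_emb_energy_le_cut_ratio:
  assumes S: "S \<noteq> {}" "S \<subset> vset n" and p: "\<forall>i\<in>vset n. 0 < p i"
  obtains v where "feasible_emb n p v"
    "\<forall>F\<in>circulations n E w. flow_energy n F v \<le> 2 * cut_ratio n E w p S"
proof -
  define A where "A = pi_weight p S"
  define B where "B = pi_weight p (vset n - S)"
  have S_sub: "S \<subseteq> vset n"
    using S(2) by (rule psubset_imp_subset)
  have finite_sides: "finite S" "finite (vset n - S)"
    using S_sub finite_subset[of S "vset n"] by (simp_all add: vset_def)
  have n: "0 < n"
    using S by (auto simp: vset_def)
  have "0 < A"
    unfolding A_def pi_weight_def using S(1) S_sub p finite_sides(1) by (intro sum_pos) auto
  moreover have "0 < B"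
    unfolding B_def pi_weight_def using S(2) p finite_sides(2) by (intro sum_pos) auto
  ultimately have min_pos: "0 < min A B"
    by simp
  obtain a b where centred: "A * a + B * b = 0" and normalised: "A * a^2 + B * b^2 = 1"
    and gap: "(a - b)^2 * min A B \<le> 2"
    using two_point_normalisation[OF \<open>0 < A\<close> \<open>0 < B\<close>] by blast
  have energy_le: "flow_energy n F (cut_emb S a b) \<le> 2 * cut_ratio n E w p S"
    if F: "F \<in> circulations n E w" for F
  proof -
    define M where "M = min (out_weight n E w S) (in_weight n E w S)"
    have flow_le: "cut_flow n F S \<le> M"
      unfolding M_def using F S_sub by (rule cut_flow_le_min_cut_weight)
    then have "0 \<le> M"
      using cut_flow_nonneg[OF F, of S] by linarith
    have "flow_energy n F (cut_emb S a b) = (a - b)^2 * cut_flow n F S"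
      using F n S_sub by (rule circulation_energy_cut_emb)
    also have "\<dots> \<le> (a - b)^2 * M"
      using flow_le by (simp add: mult_left_mono)
    also have "\<dots> \<le> 2 * M / min A B"
      using mult_right_mono[OF gap \<open>0 \<le> M\<close>] min_pos
      by (simp add: le_divide_eq mult.commute mult.left_commute)
    also have "\<dots> = 2 * cut_ratio n E w p S"
      unfolding cut_ratio_def M_def A_def B_def by simp
    finally show ?thesis .
  qed
  have "feasible_emb n p (cut_emb S a b)"
    using n S_sub centred normalised unfolding A_def B_def by (rule feasible_cut_emb)
  then show ?thesis
    using that energy_le by blast
qed

theorem mainTheorem7:
  fixes n :: nat and E :: "(nat \<times> nat) set" and w :: "nat \<Rightarrow> nat \<Rightarrow> real" and p :: "nat \<Rightarrow> real"
  assumes "2 \<le> n"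
    and "E \<subseteq> vset n \<times> vset n"
    and "\<forall>(i, j)\<in>E. 0 < w i j"
    and "\<forall>i\<in>vset n. 0 < p i"
  shows "lambda_tri n E w p \<le> 2 * dir_expansion n E w p"
proof -
  obtain S where S: "S \<noteq> {}" "S \<subset> vset n" and min_cut: "dir_expansion n E w p = cut_ratio n E w p S"
    using dir_expansion_attained[OF assms(1)] .
  obtain v where "feasible_emb n p v"
    and "\<forall>F\<in>circulations n E w. flow_energy n F v \<le> 2 * cut_ratio n E w p S"
    using cut_emb_energy_le_cut_ratio[OF S assms(4)] .
  moreover have "\<forall>(i, j)\<in>E. 0 \<le> w i j"
    using assms(3) by auto
  ultimately show ?thesis
    unfolding min_cut by (intro lambda_tri_le)
qed

end
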